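(* Let $p$ be a prime, $k>0$ an integer, and $G_{p,k}=C_{p^\infty}\times C_k\times\mathbf{T}$ (a 1-dimensional Lie group). Every closed 1-dimensional subgroup of $G_{p,k}$ is of the form $D\times\mathbf{T}$, where $D$ is a subgroup of $C_{p^\infty}\times C_k$ (and every such set is a closed 1-dimensional subgroup). Moreover, the set of closed 1-dimensional subgroups is closed in $\mathcal{C}(G_{p,k})$, and the map $\pi^*:\mathcal{C}(C_{p^\infty}\times C_k)\to\mathcal{C}(G_{p,k})$, $D\mapsto\pi^{-1}(D)=D\times\mathbf{T}$, is a homeomorphism onto this set.
   Context: $\mathbf{T}$ is the circle group; $C_m\subset\mathbf{T}$ is the group of $m$-th roots of unity; $C_{p^\infty}=\bigcup_{\ell\ge1}C_{p^\ell}$ is the Prüfer $p$-group, with the discrete topology. $\pi:G_{p,k}\to C_{p^\infty}\times C_k$ is the projection onto the first two factors. $\mathcal{C}(G)$ denotes the space of closed subgroups of a locally compact group $G$ with the Chabauty topology, generated by the sets $\{H:H\cap K=\emptyset\}$ ($K$ compact) and $\{H:H\cap U\neq\emptyset\}$ ($U$ open). *)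

theory Defs
  imports "HOL-Analysis.Analysis" "HOL-Algebra.Group"
begin

definition circle_grp :: "complex set" where
  "circle_grp = sphere 0 1"

definition roots_unity :: "nat \<Rightarrow> complex set" where
  "roots_unity m = {z. z ^ m = 1}"

definition pruefer :: "nat \<Rightarrow> complex set" where
  "pruefer p = (\<Union>l\<in>{1..}. roots_unity (p ^ l))"

definition Dgrp :: "nat \<Rightarrow> nat \<Rightarrow> (complex \<times> complex) monoid" where
  "Dgrp p k = \<lparr> carrier = pruefer p \<times> roots_unity k,
               mult = (\<lambda>(a,b) (c,d). (a * c, b * d)),
               one = (1, 1) \<rparr>"

definition Dtop :: "nat \<Rightarrow> nat \<Rightarrow> (complex \<times> complex) topology" where
  "Dtop p k = prod_topology (discrete_topology (pruefer p)) (discrete_topology (roots_unity k))"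

definition Ggrp :: "nat \<Rightarrow> nat \<Rightarrow> ((complex \<times> complex) \<times> complex) monoid" where
  "Ggrp p k = \<lparr> carrier = (pruefer p \<times> roots_unity k) \<times> circle_grp,
               mult = (\<lambda>((a,b),z) ((c,d),w). ((a * c, b * d), z * w)),
               one = ((1, 1), 1) \<rparr>"

definition Gtop :: "nat \<Rightarrow> nat \<Rightarrow> ((complex \<times> complex) \<times> complex) topology" where
  "Gtop p k = prod_topology (Dtop p k) (top_of_set circle_grp)"

definition pistar :: "nat \<Rightarrow> nat \<Rightarrow> (complex \<times> complex) set \<Rightarrow> ((complex \<times> complex) \<times> complex) set" where
  "pistar p k D = {g \<in> carrier (Ggrp p k). fst g \<in> D}"

definition closed_subgroups :: "'a topology \<Rightarrow> ('a, 'b) monoid_scheme \<Rightarrow> 'a set set" where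
  "closed_subgroups X G = {H. subgroup H G \<and> closedin X H}"

definition chabauty :: "'a topology \<Rightarrow> ('a, 'b) monoid_scheme \<Rightarrow> 'a set topology" where
  "chabauty X G = subtopology
     (topology_generated_by
        ({{H. H \<inter> K = {}} | K. compactin X K} \<union> {{H. H \<inter> U \<noteq> {}} | U. openin X U}))
     (closed_subgroups X G)"

text \<open>Dimension of a closed subgroup H of G_{p,k}: the dimension of its Lie algebra
  {X in Lie(G). exp(tX) in H for all t}, where Lie(G_{p,k}) = Lie(T) = R and
  exp(tX) = ((1,1), e^{itX}).\<close>

definition lie_alg :: "((complex \<times> complex) \<times> complex) set \<Rightarrow> real set" where
  "lie_alg H = {x. \<forall>t::real. ((1, 1), cis (t * x)) \<in> H}"

definition lie_dim :: "((complex \<times> complex) \<times> complex) set \<Rightarrow> nat" where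
  "lie_dim H = dim (lie_alg H)"

definition closed_1dim_subgroups :: "nat \<Rightarrow> nat \<Rightarrow> ((complex \<times> complex) \<times> complex) set set" where
  "closed_1dim_subgroups p k = {H \<in> closed_subgroups (Gtop p k) (Ggrp p k). lie_dim H = 1}"

end

theory Submission
  imports Defs
begin

text \<open>
  The Lie algebra of a subgroup H of G_{p,k} is either 0 or all of R, and it is R exactly when
  H contains the identity component {1} x T. A subgroup of a direct product that contains the
  whole second factor is the product of its projection with that factor, and every subgroup of
  the discrete group C_{p^infinity} x C_k is closed; so the closed 1-dimensional subgroups are
  exactly the sets D x T. Containing a fixed set of points is a closed condition in the Fell
  topology (its complement is a union of subbasic sets {H. x \<notin> H}), and since T is compact the
  maps A \<mapsto> A x T and H \<mapsto> \<pi>(H) are mutually inverse and continuous for the Fell topologies.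
\<close>

definition complex_mult_monoid :: "complex set \<Rightarrow> complex monoid" where
  "complex_mult_monoid A = \<lparr>carrier = A, mult = (*), one = 1\<rparr>"

lemma carrier_complex_mult_monoid [simp]: "carrier (complex_mult_monoid A) = A"
  by (simp add: complex_mult_monoid_def)

lemma group_complex_mult_monoid:
  assumes "1 \<in> A" "0 \<notin> A"
    and "\<And>a b. a \<in> A \<Longrightarrow> b \<in> A \<Longrightarrow> a * b \<in> A"
    and "\<And>a. a \<in> A \<Longrightarrow> inverse a \<in> A"
  shows "group (complex_mult_monoid A)"
proof (rule groupI)
  fix a assume a: "a \<in> carrier (complex_mult_monoid A)"
  then have "a \<noteq> 0" using assms(2) by auto
  with a show "\<exists>b\<in>carrier (complex_mult_monoid A). b \<otimes>\<^bsub>complex_mult_monoid A\<^esub> a = \<one>\<^bsub>complex_mult_monoid A\<^esub>"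
    using assms(4) by (intro bexI[of _ "inverse a"]) (auto simp: complex_mult_monoid_def)
qed (use assms in \<open>auto simp: complex_mult_monoid_def mult.assoc\<close>)

lemma roots_unity_one: "1 \<in> roots_unity m"
  by (simp add: roots_unity_def)

lemma roots_unity_mult: "a \<in> roots_unity m \<Longrightarrow> b \<in> roots_unity m \<Longrightarrow> a * b \<in> roots_unity m"
  by (simp add: roots_unity_def power_mult_distrib)

lemma roots_unity_inverse: "a \<in> roots_unity m \<Longrightarrow> inverse a \<in> roots_unity m"
  by (simp add: roots_unity_def power_inverse)

lemma roots_unity_subset: "m dvd n \<Longrightarrow> roots_unity m \<subseteq> roots_unity n"
  by (auto simp: roots_unity_def power_mult elim!: dvdE)

lemma zero_notin_roots_unity: "m > 0 \<Longrightarrow> 0 \<notin> roots_unity m"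
  by (simp add: roots_unity_def power_0_left)

lemma group_roots_unity: "m > 0 \<Longrightarrow> group (complex_mult_monoid (roots_unity m))"
  by (intro group_complex_mult_monoid roots_unity_one zero_notin_roots_unity roots_unity_mult
      roots_unity_inverse)

lemma pruefer_one: "1 \<in> pruefer p"
  unfolding pruefer_def using roots_unity_one by blast

lemma pruefer_mult:
  assumes "a \<in> pruefer p" "b \<in> pruefer p" shows "a * b \<in> pruefer p"
proof -
  obtain l m where "l \<ge> 1" "a \<in> roots_unity (p ^ l)" "b \<in> roots_unity (p ^ m)"
    using assms by (auto simp: pruefer_def)
  moreover have "roots_unity (p ^ l) \<subseteq> roots_unity (p ^ (l + m))"
    and "roots_unity (p ^ m) \<subseteq> roots_unity (p ^ (l + m))"
    by (simp_all add: roots_unity_subset le_imp_power_dvd)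
  ultimately have "a * b \<in> roots_unity (p ^ (l + m))"
    by (blast intro: roots_unity_mult)
  with \<open>l \<ge> 1\<close> show ?thesis
    by (auto simp: pruefer_def)
qed

lemma pruefer_inverse: "a \<in> pruefer p \<Longrightarrow> inverse a \<in> pruefer p"
  unfolding pruefer_def using roots_unity_inverse by blast

lemma zero_notin_pruefer: "p > 0 \<Longrightarrow> 0 \<notin> pruefer p"
  by (simp add: pruefer_def zero_notin_roots_unity)

lemma group_pruefer: "p > 0 \<Longrightarrow> group (complex_mult_monoid (pruefer p))"
  by (intro group_complex_mult_monoid pruefer_one zero_notin_pruefer pruefer_mult pruefer_inverse)

lemma group_circle: "group (complex_mult_monoid circle_grp)"
  by (rule group_complex_mult_monoid) (auto simp: circle_grp_def norm_mult norm_inverse)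

lemma Dgrp_eq_DirProd: "Dgrp p k = complex_mult_monoid (pruefer p) \<times>\<times> complex_mult_monoid (roots_unity k)"
  by (simp add: Dgrp_def DirProd_def complex_mult_monoid_def)

lemma Ggrp_eq_DirProd: "Ggrp p k = Dgrp p k \<times>\<times> complex_mult_monoid circle_grp"
  by (simp add: Ggrp_def Dgrp_def DirProd_def complex_mult_monoid_def case_prod_beta')

lemma carrier_Dgrp: "carrier (Dgrp p k) = pruefer p \<times> roots_unity k"
  by (simp add: Dgrp_def)

lemma one_Dgrp: "\<one>\<^bsub>Dgrp p k\<^esub> = (1, 1)"
  by (simp add: Dgrp_def)

lemma carrier_Ggrp: "carrier (Ggrp p k) = (pruefer p \<times> roots_unity k) \<times> circle_grp"
  by (simp add: Ggrp_def)

lemma group_Dgrp: "p > 0 \<Longrightarrow> k > 0 \<Longrightarrow> group (Dgrp p k)"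
  by (simp add: Dgrp_eq_DirProd DirProd_group group_pruefer group_roots_unity)

lemma subgroup_DirProd_supset_factor:
  assumes G: "group G" and K: "group K"
    and H: "subgroup H (G \<times>\<times> K)" and factor: "{\<one>\<^bsub>G\<^esub>} \<times> carrier K \<subseteq> H"
  shows "subgroup (fst ` H) G" and "H = fst ` H \<times> carrier K"
proof -
  interpret G: group G by (rule G)
  interpret K: group K by (rule K)
  have "fst \<in> hom (G \<times>\<times> K) G"
    by (auto simp: hom_def mult_DirProd')
  then interpret group_hom "G \<times>\<times> K" G fst
    by (intro group_hom.intro group_hom_axioms.intro DirProd_group G K)
  show "subgroup (fst ` H) G"
    using H by (rule subgroup_img_is_subgroup)
  have H_sub: "H \<subseteq> carrier G \<times> carrier K"
    using subgroup.subset[OF H] by simp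
  show "H = fst ` H \<times> carrier K"
  proof
    show "H \<subseteq> fst ` H \<times> carrier K" using H_sub by force
  next
    show "fst ` H \<times> carrier K \<subseteq> H"
    proof (clarsimp)
      fix a w z assume aw: "(a, w) \<in> H" and z: "z \<in> carrier K"
      with H_sub have "a \<in> carrier G" "w \<in> carrier K" by auto
      moreover have "(\<one>\<^bsub>G\<^esub>, inv\<^bsub>K\<^esub> w \<otimes>\<^bsub>K\<^esub> z) \<in> H"
        using factor z \<open>w \<in> carrier K\<close> by auto
      ultimately have "(a, w) \<otimes>\<^bsub>G \<times>\<times> K\<^esub> (\<one>\<^bsub>G\<^esub>, inv\<^bsub>K\<^esub> w \<otimes>\<^bsub>K\<^esub> z) \<in> H"
        using subgroup.m_closed[OF H aw] by blast
      then show "(a, z) \<in> H"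
        using \<open>a \<in> carrier G\<close> \<open>w \<in> carrier K\<close> z by (simp add: K.m_assoc[symmetric])
    qed
  qed
qed

lemma lie_dim_eq_1_iff: "lie_dim H = 1 \<longleftrightarrow> {(1, 1)} \<times> circle_grp \<subseteq> H"
proof
  assume "{(1, 1)} \<times> circle_grp \<subseteq> H"
  then have "lie_alg H = UNIV"
    by (auto simp: lie_alg_def circle_grp_def)
  then show "lie_dim H = 1" by (simp add: lie_dim_def)
next
  assume dim1: "lie_dim H = 1"
  have "\<not> lie_alg H \<subseteq> {0}"
  proof
    assume "lie_alg H \<subseteq> {0}"
    then have "lie_dim H \<le> dim {0 :: real}"
      unfolding lie_dim_def by (rule dim_subset)
    with dim1 show False by simp
  qed
  then obtain x where x: "x \<in> lie_alg H" "x \<noteq> 0" by blast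
  have "((1, 1), z) \<in> H" if z: "z \<in> circle_grp" for z
  proof -
    \<comment> \<open>as t ranges over R, cis (t x) sweeps out the whole circle\<close>
    from z have "z \<noteq> 0" by (auto simp: circle_grp_def)
    with z have "cis (Arg z) = z" by (simp add: circle_grp_def cis_Arg sgn_div_norm)
    moreover have "((1, 1), cis ((Arg z / x) * x)) \<in> H"
      using x(1) unfolding lie_alg_def by blast
    ultimately show ?thesis using x(2) by simp
  qed
  then show "{(1, 1)} \<times> circle_grp \<subseteq> H" by blast
qed

lemma Dtop_eq_discrete: "Dtop p k = discrete_topology (pruefer p \<times> roots_unity k)"
  by (simp add: Dtop_def prod_topology_discrete_topology)

lemma closed_subgroups_Dtop: "closed_subgroups (Dtop p k) (Dgrp p k) = {D. subgroup D (Dgrp p k)}"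
  using subgroup.subset by (fastforce simp: closed_subgroups_def Dtop_eq_discrete carrier_Dgrp)

lemma pistar_eq_Times: "subgroup D (Dgrp p k) \<Longrightarrow> pistar p k D = D \<times> circle_grp"
  using subgroup.subset[of D "Dgrp p k"] by (auto simp: pistar_def carrier_Ggrp carrier_Dgrp)

lemma closed_1dim_subgroups_eq:
  "closed_1dim_subgroups p k = {H \<in> closed_subgroups (Gtop p k) (Ggrp p k). {(1, 1)} \<times> circle_grp \<subseteq> H}"
  by (simp only: closed_1dim_subgroups_def lie_dim_eq_1_iff)

lemma closed_1dim_subgroups_eq_Times:
  assumes "p > 0" "k > 0"
  shows "closed_1dim_subgroups p k = (\<lambda>D. D \<times> circle_grp) ` {D. subgroup D (Dgrp p k)}"
proof (rule Set.set_eqI, rule iffI)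
  fix H assume "H \<in> closed_1dim_subgroups p k"
  then have "subgroup H (Dgrp p k \<times>\<times> complex_mult_monoid circle_grp)"
    and "{\<one>\<^bsub>Dgrp p k\<^esub>} \<times> carrier (complex_mult_monoid circle_grp) \<subseteq> H"
    by (simp_all add: closed_1dim_subgroups_eq closed_subgroups_def Ggrp_eq_DirProd one_Dgrp)
  from subgroup_DirProd_supset_factor[OF group_Dgrp[OF assms] group_circle this]
  show "H \<in> (\<lambda>D. D \<times> circle_grp) ` {D. subgroup D (Dgrp p k)}"
    by simp
next
  fix H assume "H \<in> (\<lambda>D. D \<times> circle_grp) ` {D. subgroup D (Dgrp p k)}"
  then obtain D where D: "subgroup D (Dgrp p k)" and H: "H = D \<times> circle_grp" by blast
  have "subgroup (D \<times> carrier (complex_mult_monoid circle_grp)) (Ggrp p k)"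
    unfolding Ggrp_eq_DirProd
    using group_Dgrp[OF assms] D group_circle by (intro DirProd_subgroups group.subgroup_self)
  moreover have "closedin (Gtop p k) H"
    using subgroup.subset[OF D]
    by (simp add: H Gtop_def closedin_prod_Times_iff Dtop_eq_discrete carrier_Dgrp)
  moreover have "(1, 1) \<in> D"
    using subgroup.one_closed[OF D] by (simp add: one_Dgrp)
  ultimately show "H \<in> closed_1dim_subgroups p k"
    by (auto simp: H closed_1dim_subgroups_eq closed_subgroups_def)
qed

lemma Times_Int_eq_empty_iff:
  assumes "K \<subseteq> S \<times> T"
  shows "A \<times> T \<inter> K = {} \<longleftrightarrow> A \<inter> fst ` K = {}"
proof
  assume "A \<times> T \<inter> K = {}"
  with assms show "A \<inter> fst ` K = {}" by force
next
  assume "A \<inter> fst ` K = {}"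
  then show "A \<times> T \<inter> K = {}" by force
qed

lemma fst_image_Int_eq_empty_iff:
  assumes "B \<subseteq> S \<times> T"
  shows "fst ` B \<inter> K = {} \<longleftrightarrow> B \<inter> K \<times> T = {}"
proof
  assume "fst ` B \<inter> K = {}"
  then show "B \<inter> K \<times> T = {}" by force
next
  assume "B \<inter> K \<times> T = {}"
  with assms show "fst ` B \<inter> K = {}" by force
qed

definition fell_topology :: "'a topology \<Rightarrow> 'a set topology" where
  "fell_topology X = topology_generated_by
     ({{A. A \<inter> K = {}} | K. compactin X K} \<union> {{A. A \<inter> U \<noteq> {}} | U. openin X U})"

lemma chabauty_eq_fell: "chabauty X G = subtopology (fell_topology X) (closed_subgroups X G)"
  by (simp add: chabauty_def fell_topology_def)

lemma topspace_fell_topology [simp]: "topspace (fell_topology X) = UNIV"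
proof -
  have "UNIV \<in> {{A. A \<inter> K = {}} | K. compactin X K}" by auto
  then show ?thesis by (auto simp: fell_topology_def simp del: Union_Un_distrib)
qed

lemma openin_fell_disjoint: "compactin X K \<Longrightarrow> openin (fell_topology X) {A. A \<inter> K = {}}"
  unfolding fell_topology_def by (rule topology_generated_by_Basis) blast

lemma openin_fell_meets: "openin X U \<Longrightarrow> openin (fell_topology X) {A. A \<inter> U \<noteq> {}}"
  unfolding fell_topology_def by (rule topology_generated_by_Basis) blast

lemma continuous_map_into_fell:
  assumes "\<And>K. compactin X K \<Longrightarrow> openin T (f -` {A. A \<inter> K = {}} \<inter> topspace T)"
    and "\<And>U. openin X U \<Longrightarrow> openin T (f -` {A. A \<inter> U \<noteq> {}} \<inter> topspace T)"
  shows "continuous_map T (fell_topology X) f"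
  unfolding fell_topology_def
proof (rule continuous_on_generated_topo)
  show "f ` topspace T \<subseteq> \<Union> ({{A. A \<inter> K = {}} | K. compactin X K} \<union> {{A. A \<inter> U \<noteq> {}} | U. openin X U})"
    using topspace_fell_topology[of X] by (simp add: fell_topology_def)
qed (use assms in blast)

lemma closedin_fell_supersets:
  assumes "S \<subseteq> topspace X" shows "closedin (fell_topology X) {A. S \<subseteq> A}"
proof -
  have "UNIV - {A. S \<subseteq> A} = (\<Union>x\<in>S. {A. A \<inter> {x} = {}})" by auto
  moreover have "openin (fell_topology X) {A. A \<inter> {x} = {}}" if "x \<in> S" for x
    using that assms by (intro openin_fell_disjoint) auto
  then have "openin (fell_topology X) (\<Union>x\<in>S. {A. A \<inter> {x} = {}})"
    by (intro openin_Union) blast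
  ultimately show ?thesis by (simp add: closedin_def)
qed

lemma closedin_chabauty_supersets:
  assumes "S \<subseteq> topspace X"
  shows "closedin (chabauty X G) {H \<in> closed_subgroups X G. S \<subseteq> H}"
  unfolding chabauty_eq_fell Collect_conj_eq Collect_mem_eq
  using assms by (intro closedin_subtopology_Int_closed closedin_fell_supersets)

lemma continuous_map_fell_Times:
  "continuous_map (fell_topology X) (fell_topology (prod_topology X Y)) (\<lambda>A. A \<times> topspace Y)"
proof (rule continuous_map_into_fell)
  fix K assume K: "compactin (prod_topology X Y) K"
  then have "K \<subseteq> topspace X \<times> topspace Y"
    using compactin_subset_topspace by fastforce
  then have "(\<lambda>A. A \<times> topspace Y) -` {B. B \<inter> K = {}} = {A. A \<inter> fst ` K = {}}"
    by (simp add: Times_Int_eq_empty_iff)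
  moreover have "compactin X (fst ` K)"
    using K continuous_map_fst by (rule image_compactin)
  ultimately show "openin (fell_topology X) ((\<lambda>A. A \<times> topspace Y) -` {B. B \<inter> K = {}} \<inter> topspace (fell_topology X))"
    by (simp add: openin_fell_disjoint)
next
  fix U assume U: "openin (prod_topology X Y) U"
  then have "U \<subseteq> topspace X \<times> topspace Y"
    using openin_subset by fastforce
  then have "(\<lambda>A. A \<times> topspace Y) -` {B. B \<inter> U \<noteq> {}} = {A. A \<inter> fst ` U \<noteq> {}}"
    by (simp add: Times_Int_eq_empty_iff)
  moreover have "openin X (fst ` U)"
    using U open_map_fst by (auto simp: open_map_def)
  ultimately show "openin (fell_topology X) ((\<lambda>A. A \<times> topspace Y) -` {B. B \<inter> U \<noteq> {}} \<inter> topspace (fell_topology X))"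
    by (simp add: openin_fell_meets)
qed

lemma continuous_map_fell_fst_image:
  assumes "compact_space Y"
  shows "continuous_map (subtopology (fell_topology (prod_topology X Y)) (Pow (topspace X \<times> topspace Y)))
           (fell_topology X) (image fst)"
proof (rule continuous_map_into_fell)
  fix K assume K: "compactin X K"
  have "(image fst) -` {A. A \<inter> K = {}} \<inter> Pow (topspace X \<times> topspace Y)
      = {B. B \<inter> (K \<times> topspace Y) = {}} \<inter> Pow (topspace X \<times> topspace Y)"
    by (auto simp: fst_image_Int_eq_empty_iff)
  moreover have "compactin (prod_topology X Y) (K \<times> topspace Y)"
    using K assms by (simp add: compactin_Times compact_space_def)
  ultimately show "openin (subtopology (fell_topology (prod_topology X Y)) (Pow (topspace X \<times> topspace Y)))
      ((image fst) -` {A. A \<inter> K = {}} \<inter> topspace (subtopology (fell_topology (prod_topology X Y)) (Pow (topspace X \<times> topspace Y))))"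
    by (auto simp: openin_subtopology intro: openin_fell_disjoint)
next
  fix U assume U: "openin X U"
  have "(image fst) -` {A. A \<inter> U \<noteq> {}} \<inter> Pow (topspace X \<times> topspace Y)
      = {B. B \<inter> (U \<times> topspace Y) \<noteq> {}} \<inter> Pow (topspace X \<times> topspace Y)"
    by (auto simp: fst_image_Int_eq_empty_iff)
  moreover have "openin (prod_topology X Y) (U \<times> topspace Y)"
    using U by (simp add: openin_prod_Times_iff)
  ultimately show "openin (subtopology (fell_topology (prod_topology X Y)) (Pow (topspace X \<times> topspace Y)))
      ((image fst) -` {A. A \<inter> U \<noteq> {}} \<inter> topspace (subtopology (fell_topology (prod_topology X Y)) (Pow (topspace X \<times> topspace Y))))"
    by (auto simp: openin_subtopology intro: openin_fell_meets)
qed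

lemma homeomorphic_map_fell_Times:
  fixes X :: "'a topology" and Y :: "'b topology"
  assumes "compact_space Y" "topspace Y \<noteq> {}" "\<A> \<subseteq> Pow (topspace X)"
  shows "homeomorphic_map (subtopology (fell_topology X) \<A>)
           (subtopology (fell_topology (prod_topology X Y)) ((\<lambda>A. A \<times> topspace Y) ` \<A>))
           (\<lambda>A. A \<times> topspace Y)"
proof -
  define f where "f = (\<lambda>A :: 'a set. A \<times> topspace Y)"
  have fst_f: "fst ` f A = A" for A
    using assms(2) by (simp add: f_def)
  have "f ` \<A> \<subseteq> Pow (topspace X \<times> topspace Y)"
    using assms(3) by (auto simp: f_def)
  then have "continuous_map (subtopology (fell_topology (prod_topology X Y)) (f ` \<A>))
      (fell_topology X) (image fst)"
    by (rule continuous_map_from_subtopology_mono[OF continuous_map_fell_fst_image[OF assms(1)]])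
  moreover have "continuous_map (fell_topology X) (fell_topology (prod_topology X Y)) f"
    unfolding f_def by (rule continuous_map_fell_Times)
  ultimately have "homeomorphic_maps (subtopology (fell_topology X) \<A>)
      (subtopology (fell_topology (prod_topology X Y)) (f ` \<A>)) f (image fst)"
    unfolding homeomorphic_maps_def continuous_map_in_subtopology
    by (auto simp: fst_f image_image intro: continuous_map_from_subtopology)
  then show ?thesis
    unfolding f_def homeomorphic_map_maps by blast
qed

lemma homeomorphic_map_pistar:
  assumes "p > 0" "k > 0"
  shows "homeomorphic_map (chabauty (Dtop p k) (Dgrp p k))
           (subtopology (chabauty (Gtop p k) (Ggrp p k)) (closed_1dim_subgroups p k))
           (pistar p k)"
proof -
  let ?SD = "{D. subgroup D (Dgrp p k)}"
  have "compact_space (top_of_set circle_grp)"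
    by (simp add: compact_space_subtopology compactin_subtopology circle_grp_def compact_sphere)
  moreover have "topspace (top_of_set circle_grp) \<noteq> {}"
    by (simp add: circle_grp_def)
  moreover have "?SD \<subseteq> Pow (topspace (Dtop p k))"
    using subgroup.subset by (fastforce simp: Dtop_eq_discrete carrier_Dgrp)
  ultimately have "homeomorphic_map (subtopology (fell_topology (Dtop p k)) ?SD)
      (subtopology (fell_topology (prod_topology (Dtop p k) (top_of_set circle_grp)))
        ((\<lambda>D. D \<times> topspace (top_of_set circle_grp)) ` ?SD))
      (\<lambda>D. D \<times> topspace (top_of_set circle_grp))"
    by (rule homeomorphic_map_fell_Times)
  then have "homeomorphic_map (subtopology (fell_topology (Dtop p k)) ?SD)
      (subtopology (fell_topology (Gtop p k)) ((\<lambda>D. D \<times> circle_grp) ` ?SD)) (\<lambda>D. D \<times> circle_grp)"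
    by (simp only: topspace_euclidean_subtopology Gtop_def[symmetric])
  moreover have "closed_1dim_subgroups p k \<subseteq> closed_subgroups (Gtop p k) (Ggrp p k)"
    by (auto simp: closed_1dim_subgroups_def)
  ultimately have "homeomorphic_map (chabauty (Dtop p k) (Dgrp p k))
      (subtopology (chabauty (Gtop p k) (Ggrp p k)) (closed_1dim_subgroups p k)) (\<lambda>D. D \<times> circle_grp)"
    by (simp only: chabauty_eq_fell closed_subgroups_Dtop subtopology_subtopology Int_absorb1
        closed_1dim_subgroups_eq_Times[OF assms, symmetric])
  then show ?thesis
    by (rule homeomorphic_map_eq) (simp add: chabauty_eq_fell closed_subgroups_Dtop pistar_eq_Times)
qed

theorem lemma8:
  fixes p k :: nat
  assumes "prime p" and "k > 0"
  shows "(\<forall>H. H \<in> closed_1dim_subgroups p k \<longleftrightarrow>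
              (\<exists>D. subgroup D (Dgrp p k) \<and> H = D \<times> circle_grp))
       \<and> (\<forall>D. subgroup D (Dgrp p k) \<longrightarrow> pistar p k D = D \<times> circle_grp)
       \<and> closedin (chabauty (Gtop p k) (Ggrp p k)) (closed_1dim_subgroups p k)
       \<and> homeomorphic_map (chabauty (Dtop p k) (Dgrp p k))
           (subtopology (chabauty (Gtop p k) (Ggrp p k)) (closed_1dim_subgroups p k))
           (pistar p k)"
proof (intro conjI allI impI)
  have pk: "p > 0" "k > 0" using assms prime_gt_0_nat by auto
  show "H \<in> closed_1dim_subgroups p k \<longleftrightarrow> (\<exists>D. subgroup D (Dgrp p k) \<and> H = D \<times> circle_grp)" for H
    by (auto simp: closed_1dim_subgroups_eq_Times[OF pk])
  show "pistar p k D = D \<times> circle_grp" if "subgroup D (Dgrp p k)" for D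
    using that by (rule pistar_eq_Times)
  show "closedin (chabauty (Gtop p k) (Ggrp p k)) (closed_1dim_subgroups p k)"
    unfolding closed_1dim_subgroups_eq
    by (rule closedin_chabauty_supersets) (auto simp: Gtop_def Dtop_eq_discrete pruefer_one roots_unity_one)
  show "homeomorphic_map (chabauty (Dtop p k) (Dgrp p k))
      (subtopology (chabauty (Gtop p k) (Ggrp p k)) (closed_1dim_subgroups p k)) (pistar p k)"
    using homeomorphic_map_pistar[OF pk] .
qed

end
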